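(* Let $\mathbb I=(0,1]\cap\mathbb Q$, canonically arranged as below. Then $\sigma(\mathbb I)=(\Phi(n))_{n\in\mathbb N}$, where $\Phi(n)=\sum_{i=1}^n\varphi(i)$ and $\varphi$ is Euler's totient function; moreover $\sigma(\mathbb I)\approx_\mathcal F\alpha^2$, and more precisely $$\tfrac{3}{10}\,\alpha^2<_\mathcal F\sigma(\mathbb I)<_\mathcal F\frac{\alpha^2-\alpha}{2}.$$
   Context: $\mathbb N=\{1,2,\dots\}$. Each $x\in\mathbb I$ is represented uniquely as the pair $(k,m)\in\mathbb N\times\mathbb N$ with $x=k/m$, $\gcd(k,m)=1$, $k\le m$. $\mathbb N\times\mathbb N$ is arranged with $n$-th component $\{(i,j):\max\{i,j\}=n\}$, and $\mathbb I$ inherits the arrangement, so its $n$-th component is $\mathbb I_n=\{(k,n): \gcd(k,n)=1,\ k\le n\}$. The size sequence is $\sigma(\mathbb I)=(\sigma_n(\mathbb I))_n$, $\sigma_n(\mathbb I)=|\mathbb I_1|+\dots+|\mathbb I_n|$. $\alpha=(n)_n$; operations on sequences are componentwise, rational constants are identified with constant sequences. $(a_n)<_\mathcal F(b_n)$ iff $a_n<b_n$ for all sufficiently large $n$; $(a_n)\ge_\mathcal F(b_n)$ analogously; $(a_n)\approx_\mathcal F(b_n)$ iff some $k\in\mathbb N$ has $k(a_n)\ge_\mathcal F(b_n)$ and some $k$ has $k(b_n)\ge_\mathcal F(a_n)$. *)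

theory Defs
  imports Complex_Main "HOL-Number_Theory.Number_Theory"
begin

definition unitQ :: "rat set" where
  "unitQ = {x. 0 < x \<and> x \<le> 1}"

text \<open>Canonical representation of a positive rational as the pair (k,m) with
  x = k/m, gcd k m = 1 (quotient_of gives the reduced fraction with positive denominator).\<close>
definition rep :: "rat \<Rightarrow> nat \<times> nat" where
  "rep x = (nat (fst (quotient_of x)), nat (snd (quotient_of x)))"

text \<open>n-th component of N x N: pairs with max i j = n; I inherits it.\<close>
definition comp_I :: "nat \<Rightarrow> (nat \<times> nat) set" where
  "comp_I n = {p \<in> rep ` unitQ. max (fst p) (snd p) = n}"

definition sigmaI :: "nat \<Rightarrow> nat" where
  "sigmaI n = (\<Sum>i=1..n. card (comp_I i))"

definition lessF :: "(nat \<Rightarrow> real) \<Rightarrow> (nat \<Rightarrow> real) \<Rightarrow> bool" where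
  "lessF a b \<longleftrightarrow> (\<forall>\<^sub>F n in sequentially. a n < b n)"

definition geF :: "(nat \<Rightarrow> real) \<Rightarrow> (nat \<Rightarrow> real) \<Rightarrow> bool" where
  "geF a b \<longleftrightarrow> (\<forall>\<^sub>F n in sequentially. a n \<ge> b n)"

definition approxF :: "(nat \<Rightarrow> real) \<Rightarrow> (nat \<Rightarrow> real) \<Rightarrow> bool" where
  "approxF a b \<longleftrightarrow> (\<exists>k::nat. k \<ge> 1 \<and> geF (\<lambda>n. real k * a n) b)
                   \<and> (\<exists>k::nat. k \<ge> 1 \<and> geF (\<lambda>n. real k * b n) a)"

end

theory Submission
  imports Defs
begin

(* The fractions k/m in lowest terms with k <= m <= n are counted by Phi(n), and the coprime
   pairs in [1,n]^2 number 2 Phi(n) - 1 (the two triangles a <= b and b <= a overlap only in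
   (1,1)). Discarding from [1,n]^2 the pairs with a common prime factor p <= 67 leaves, up to an
   error O(n) coming from the rounding of n/p, the proportion prod_{p <= 67} (1 - 1/p^2) > 0.6095
   of all pairs. A survivor that is not coprime has a common prime factor q > 67, and there are
   at most sum_q (n/q)^2 <= n^2 sum_k 1/(69 + 2k)^2 <= n^2/136 of those, so
   2 Phi(n) > 0.602 n^2 - O(n). For the upper bound it suffices to discard the (n div 2)^2 pairs
   of even numbers. *)

lemma rep_image_unitQ: "rep ` unitQ = {(k, m). 0 < k \<and> k \<le> m \<and> coprime k m}"
proof (intro equalityI subsetI)
  fix p assume "p \<in> rep ` unitQ"
  then obtain x where x: "x \<in> unitQ" "p = rep x" by auto
  obtain a b where q: "quotient_of x = (a, b)" by force
  have b: "b > 0" using quotient_of_denom_pos[OF q] .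
  have x_eq: "x = of_int a / of_int b" using quotient_of_div[OF q] .
  from x(1) have "0 < x" "x \<le> 1" by (auto simp: unitQ_def)
  with x_eq b have ab: "0 < a" "a \<le> b"
    by (auto simp: zero_less_divide_iff divide_le_eq)
  have "coprime (nat a) (nat b)"
    using quotient_of_coprime[OF q] ab b by (metis coprime_int_iff int_nat_eq less_imp_le)
  then show "p \<in> {(k, m). 0 < k \<and> k \<le> m \<and> coprime k m}"
    using x(2) q ab by (auto simp: rep_def)
next
  fix p :: "nat \<times> nat" assume "p \<in> {(k, m). 0 < k \<and> k \<le> m \<and> coprime k m}"
  then obtain k m where p: "p = (k, m)" "0 < k" "k \<le> m" "coprime k m" by auto
  define x where "x = Fract (int k) (int m)"
  have q: "quotient_of x = (int k, int m)"
    using p by (simp add: x_def quotient_of_Fract normalize_def)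
  have "x = of_int (int k) / of_int (int m)" using quotient_of_div[OF q] .
  then have "x \<in> unitQ" using p by (simp add: unitQ_def)
  moreover have "rep x = p" using q p by (simp add: rep_def)
  ultimately show "p \<in> rep ` unitQ" by force
qed

lemma comp_I_eq_image_totatives: "comp_I n = (\<lambda>k. (k, n)) ` totatives n"
  by (auto simp: comp_I_def rep_image_unitQ totatives_def max_def)

lemma sigmaI_eq_sum_totient: "sigmaI n = (\<Sum>i=1..n. totient i)"
proof -
  have "card (comp_I i) = totient i" for i
    unfolding comp_I_eq_image_totatives totient_def by (subst card_image) (auto simp: inj_on_def)
  then show ?thesis by (simp add: sigmaI_def)
qed

definition coprime_pairs :: "nat \<Rightarrow> (nat \<times> nat) set" where
  "coprime_pairs n = {(a, b) \<in> {1..n} \<times> {1..n}. coprime a b}"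

lemma card_coprime_pairs:
  assumes "n \<ge> 1"
  shows "card (coprime_pairs n) + 1 = 2 * (\<Sum>i=1..n. totient i)"
proof -
  define L where "L = {(a, b) \<in> coprime_pairs n. a \<le> b}"
  define swap :: "nat \<times> nat \<Rightarrow> nat \<times> nat" where "swap = (\<lambda>(a, b). (b, a))"
  have "finite L"
    by (auto simp: L_def coprime_pairs_def intro: finite_subset[of _ "{1..n} \<times> {1..n}"])
  then have fin: "finite L" "finite (swap ` L)" by simp_all
  have union: "coprime_pairs n = L \<union> swap ` L"
    by (auto simp: L_def swap_def coprime_pairs_def image_iff coprime_commute)
  have inter: "L \<inter> swap ` L = {(1, 1)}"
    using assms by (auto simp: L_def swap_def coprime_pairs_def)
  have "L = (\<lambda>(b, a). (a, b)) ` (SIGMA b:{1..n}. totatives b)"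
    by (auto simp: L_def coprime_pairs_def totatives_def image_iff)
  then have card_L: "card L = (\<Sum>i=1..n. totient i)"
    by (simp add: card_image inj_on_def card_SigmaI totient_def)
  have "card (swap ` L) = card L"
    by (rule card_image) (auto simp: swap_def inj_on_def)
  then show ?thesis
    using card_Un_Int[OF fin] union inter card_L by simp
qed

definition multiple_pairs :: "nat \<Rightarrow> nat \<Rightarrow> (nat \<times> nat) set" where
  "multiple_pairs q n = {(a, b) \<in> {1..n} \<times> {1..n}. q dvd a \<and> q dvd b}"

definition sieved_pairs :: "nat set \<Rightarrow> nat \<Rightarrow> (nat \<times> nat) set" where
  "sieved_pairs P n = {(a, b) \<in> {1..n} \<times> {1..n}. \<forall>p\<in>P. \<not> (p dvd a \<and> p dvd b)}"

lemma finite_sieved_pairs [simp]: "finite (sieved_pairs P n)"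
  by (rule finite_subset[of _ "{1..n} \<times> {1..n}"]) (auto simp: sieved_pairs_def)

lemma sieved_pairs_empty [simp]: "sieved_pairs {} n = {1..n} \<times> {1..n}"
  by (auto simp: sieved_pairs_def)

lemma sieved_pairs_insert: "sieved_pairs (insert p P) n = sieved_pairs P n - multiple_pairs p n"
  by (auto simp: sieved_pairs_def multiple_pairs_def)

lemma sieved_pairs_Int_multiple_pairs:
  assumes p: "prime p" and P: "\<forall>q\<in>P. prime q" "p \<notin> P"
  shows "sieved_pairs P n \<inter> multiple_pairs p n
           = (\<lambda>(x, y). (p * x, p * y)) ` sieved_pairs P (n div p)"
proof (intro equalityI subsetI)
  fix z assume "z \<in> sieved_pairs P n \<inter> multiple_pairs p n"
  then obtain x y where z: "z = (p * x, p * y)" "p * x \<in> {1..n}" "p * y \<in> {1..n}"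
      "\<forall>q\<in>P. \<not> (q dvd p * x \<and> q dvd p * y)"
    by (auto simp: sieved_pairs_def multiple_pairs_def elim!: dvdE)
  have "x \<in> {1..n div p}" "y \<in> {1..n div p}"
    using z(2,3) p by (auto simp: less_eq_div_iff_mult_less_eq prime_gt_0_nat mult.commute)
  moreover have "\<forall>q\<in>P. \<not> (q dvd x \<and> q dvd y)"
    using z(4) by auto
  ultimately show "z \<in> (\<lambda>(x, y). (p * x, p * y)) ` sieved_pairs P (n div p)"
    using z(1) by (auto simp: sieved_pairs_def)
next
  fix z assume "z \<in> (\<lambda>(x, y). (p * x, p * y)) ` sieved_pairs P (n div p)"
  then obtain x y where z: "z = (p * x, p * y)" "x \<in> {1..n div p}" "y \<in> {1..n div p}"
      "\<forall>q\<in>P. \<not> (q dvd x \<and> q dvd y)"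
    by (auto simp: sieved_pairs_def)
  have "p * x \<in> {1..n}" "p * y \<in> {1..n}"
    using z(2,3) prime_gt_0_nat[OF p] by (auto simp: less_eq_div_iff_mult_less_eq mult.commute)
  moreover have "\<not> (q dvd p * x \<and> q dvd p * y)" if q: "q \<in> P" for q
  proof -
    have "\<not> q dvd p" using P q p by (metis primes_dvd_imp_eq)
    then show ?thesis using z(4) q P by (metis prime_dvd_mult_iff)
  qed
  ultimately show "z \<in> sieved_pairs P n \<inter> multiple_pairs p n"
    using z(1) by (auto simp: sieved_pairs_def multiple_pairs_def)
qed

lemma card_sieved_pairs_Int_multiple_pairs:
  assumes "prime p" and "\<forall>q\<in>P. prime q" "p \<notin> P"
  shows "card (sieved_pairs P n \<inter> multiple_pairs p n) = card (sieved_pairs P (n div p))"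
  unfolding sieved_pairs_Int_multiple_pairs[OF assms]
  using prime_gt_0_nat[OF assms(1)] by (subst card_image) (auto simp: inj_on_def)

lemma card_multiple_pairs:
  assumes "prime q"
  shows "card (multiple_pairs q n) = (n div q)^2"
proof -
  have "multiple_pairs q n = sieved_pairs {} n \<inter> multiple_pairs q n"
    by (auto simp: multiple_pairs_def)
  then show ?thesis
    using card_sieved_pairs_Int_multiple_pairs[OF assms, of "{}" n] by (simp add: power2_eq_square)
qed

lemma card_sieved_pairs_insert:
  assumes "prime p" and "\<forall>q\<in>P. prime q" "p \<notin> P"
  shows "card (sieved_pairs (insert p P) n) + card (sieved_pairs P (n div p))
           = card (sieved_pairs P n)"
  using card_Diff_subset_Int[of "sieved_pairs P n" "multiple_pairs p n"]
    card_mono[of "sieved_pairs P n" "sieved_pairs P n \<inter> multiple_pairs p n"]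
    card_sieved_pairs_Int_multiple_pairs[OF assms, of n]
  by (simp add: sieved_pairs_insert)

lemma abs_square_divide_minus_square_div_le:
  "\<bar>(real n / real p)^2 - real (n div p)^2\<bar> \<le> 2 * real n / real p"
proof -
  define t where "t = real n / real p"
  define y where "y = real (n div p)"
  have floor_t: "y = of_int \<lfloor>t\<rfloor>"
    unfolding t_def y_def floor_divide_of_nat_eq by simp
  have "0 \<le> y" by (simp add: y_def)
  moreover have "y \<le> t" "t - y < 1"
    using floor_t floor_correct[of t] unfolding of_int_add of_int_1 by linarith+
  have "t^2 - y^2 = (t - y) * (t + y)"
    by (simp add: power2_eq_square algebra_simps)
  moreover have "(t - y) * (t + y) \<le> t + y"
    using \<open>0 \<le> y\<close> \<open>y \<le> t\<close> \<open>t - y < 1\<close> mult_right_mono[of "t - y" 1 "t + y"] by simp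
  moreover have "0 \<le> (t - y) * (t + y)"
    using \<open>0 \<le> y\<close> \<open>y \<le> t\<close> by simp
  ultimately have "\<bar>t^2 - y^2\<bar> \<le> 2 * t"
    using \<open>y \<le> t\<close> unfolding abs_le_iff by linarith
  then show ?thesis
    by (simp add: t_def y_def)
qed

lemma card_sieved_pairs_estimate:
  assumes "finite P" and "\<forall>p\<in>P. prime p"
  shows "\<bar>real (card (sieved_pairs P n)) - (\<Prod>p\<in>P. 1 - 1 / real p ^ 2) * real n ^ 2\<bar>
           \<le> (2 ^ card P - 1) * real n"
  using assms
proof (induction P arbitrary: n rule: finite_induct)
  case empty
  then show ?case by (simp add: power2_eq_square)
next
  case (insert p P)
  define c where "c = (\<Prod>q\<in>P. 1 - 1 / real q ^ 2)"
  define e :: real where "e = 2 ^ card P - 1"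
  define s where "s m = real (card (sieved_pairs P m))" for m
  define y where "y = n div p"
  have p: "prime p" and P: "\<forall>q\<in>P. prime q" using insert.prems by auto
  have "1 \<le> real q ^ 2" if "q \<in> P" for q
    using P that prime_ge_1_nat[of q] by (simp add: one_le_power)
  then have "0 \<le> c" "c \<le> 1"
    unfolding c_def by (auto intro!: prod_nonneg prod_le_1 simp: divide_le_eq_1)
  have p_ge_2: "real p \<ge> 2" using prime_ge_2_nat[OF p] by simp
  have "e \<ge> 0" by (simp add: e_def)
  have est_n: "\<bar>s n - c * real n ^ 2\<bar> \<le> e * real n"
    using insert.IH P by (simp add: s_def c_def e_def)
  have "\<bar>s y - c * real y ^ 2\<bar> \<le> e * real y"
    using insert.IH P by (simp add: s_def c_def e_def)
  also have "\<dots> \<le> e * real n"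
    using \<open>e \<ge> 0\<close> by (intro mult_left_mono) (simp_all add: y_def)
  finally have est_y: "\<bar>s y - c * real y ^ 2\<bar> \<le> e * real n" .
  have "\<bar>c * ((real n / real p)^2 - real y ^ 2)\<bar> \<le> 1 * (2 * real n / real p)"
    unfolding abs_mult y_def using \<open>0 \<le> c\<close> \<open>c \<le> 1\<close>
    by (intro mult_mono abs_square_divide_minus_square_div_le) auto
  also have "\<dots> \<le> real n"
    using mult_left_mono[OF p_ge_2, of "real n"] by (simp add: divide_le_eq mult.commute)
  finally have est_diff: "\<bar>c * ((real n / real p)^2 - real y ^ 2)\<bar> \<le> real n" .
  have card_eq: "real (card (sieved_pairs (insert p P) n)) = s n - s y"
    using card_sieved_pairs_insert[OF p P insert.hyps(2), of n] by (simp add: s_def y_def)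
  have prod_eq: "(\<Prod>q\<in>insert p P. 1 - 1 / real q ^ 2) = c * (1 - 1 / real p ^ 2)"
    using insert.hyps by (simp add: c_def mult.commute)
  have "real (card (sieved_pairs (insert p P) n))
          - (\<Prod>q\<in>insert p P. 1 - 1 / real q ^ 2) * real n ^ 2
      = (s n - c * real n ^ 2) - (s y - c * real y ^ 2) + c * ((real n / real p)^2 - real y ^ 2)"
    unfolding card_eq prod_eq by (simp add: power_divide algebra_simps)
  then have "\<bar>real (card (sieved_pairs (insert p P) n))
          - (\<Prod>q\<in>insert p P. 1 - 1 / real q ^ 2) * real n ^ 2\<bar>
      \<le> e * real n + e * real n + real n"
    using est_n est_y est_diff by linarith
  also have "\<dots> = (2 ^ card (insert p P) - 1) * real n"
    using insert.hyps by (simp add: e_def algebra_simps)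
  finally show ?case .
qed

lemma coprime_pairs_subset_sieved_pairs:
  assumes "1 \<notin> P"
  shows "coprime_pairs n \<subseteq> sieved_pairs P n"
  using assms coprime_common_divisor_nat unfolding coprime_pairs_def sieved_pairs_def by blast

lemma sieved_pairs_subset:
  "sieved_pairs P n
     \<subseteq> coprime_pairs n \<union> (\<Union>q\<in>{q. prime q \<and> q \<notin> P \<and> q \<le> n}. multiple_pairs q n)"
proof
  fix z assume z: "z \<in> sieved_pairs P n"
  obtain a b where "z = (a, b)"
    by (cases z)
  with z have ab: "z = (a, b)" "a \<in> {1..n}" "b \<in> {1..n}" "\<forall>p\<in>P. \<not> (p dvd a \<and> p dvd b)"
    by (simp_all add: sieved_pairs_def)
  show "z \<in> coprime_pairs n \<union> (\<Union>q\<in>{q. prime q \<and> q \<notin> P \<and> q \<le> n}. multiple_pairs q n)"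
  proof (cases "coprime a b")
    case True
    then have "z \<in> coprime_pairs n"
      using ab by (simp add: coprime_pairs_def)
    then show ?thesis by blast
  next
    case False
    then have "gcd a b \<noteq> 1"
      by (simp only: coprime_iff_gcd_eq_1 not_False_eq_True)
    then obtain q where "prime q" "q dvd gcd a b"
      using prime_factor_nat by blast
    then have q: "prime q" "q dvd a" "q dvd b"
      by simp_all
    have "q \<notin> P"
      using ab(4) q by blast
    moreover have "q \<le> n"
      using dvd_imp_le[OF q(2)] ab(2) by simp
    moreover have "z \<in> multiple_pairs q n"
      using ab q by (simp add: multiple_pairs_def)
    ultimately show ?thesis
      using q(1) by blast
  qed
qed

lemma card_sieved_pairs_le:
  "card (sieved_pairs P n)
     \<le> card (coprime_pairs n) + (\<Sum>q | prime q \<and> q \<notin> P \<and> q \<le> n. (n div q)^2)"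
proof -
  let ?Q = "{q. prime q \<and> q \<notin> P \<and> q \<le> n}"
  have fin: "finite (coprime_pairs n)" "finite ?Q" "\<forall>q\<in>?Q. finite (multiple_pairs q n)"
    by (auto simp: coprime_pairs_def multiple_pairs_def
             intro: finite_subset[of _ "{1..n} \<times> {1..n}"] finite_subset[of _ "{..n}"])
  have "card (sieved_pairs P n) \<le> card (coprime_pairs n \<union> (\<Union>q\<in>?Q. multiple_pairs q n))"
    using fin by (intro card_mono sieved_pairs_subset) auto
  also have "\<dots> \<le> card (coprime_pairs n) + card (\<Union>q\<in>?Q. multiple_pairs q n)"
    by (rule card_Un_le)
  also have "card (\<Union>q\<in>?Q. multiple_pairs q n) \<le> (\<Sum>q\<in>?Q. card (multiple_pairs q n))"
    using fin by (intro card_UN_le) auto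
  also have "\<dots> = (\<Sum>q\<in>?Q. (n div q)^2)"
    by (intro sum.cong) (auto simp: card_multiple_pairs)
  finally show ?thesis by simp
qed

lemma inverse_square_le_telescoping:
  fixes j :: real
  assumes "j > 1"
  shows "1 / j^2 \<le> 1 / (2 * (j - 1)) - 1 / (2 * (j + 1))"
proof -
  have "(j - 1) * (j + 1) \<le> j^2"
    by (simp add: power2_eq_square algebra_simps)
  moreover have "(j - 1) * (j + 1) > 0"
    using assms by (intro mult_pos_pos) auto
  ultimately have "1 / j^2 \<le> 1 / ((j - 1) * (j + 1))"
    by (intro frac_le) auto
  also have "\<dots> = 1 / (2 * (j - 1)) - 1 / (2 * (j + 1))"
  proof -
    have "j - 1 \<noteq> 0" "j + 1 \<noteq> 0" "j * j \<noteq> 1"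
      using assms by (auto simp: square_eq_1_iff)
    then show ?thesis by (simp add: field_simps)
  qed
  finally show ?thesis .
qed

lemma sum_inverse_squares_step_two_le:
  assumes "a > 1"
  shows "(\<Sum>k<N. 1 / (a + 2 * real k)^2) \<le> 1 / (2 * (a - 1)) - 1 / (2 * (a - 1 + 2 * real N))"
proof (induction N)
  case 0
  then show ?case by simp
next
  case (Suc N)
  have "1 / (a + 2 * real N)^2
          \<le> 1 / (2 * (a - 1 + 2 * real N)) - 1 / (2 * (a - 1 + 2 * real (Suc N)))"
    using inverse_square_le_telescoping[of "a + 2 * real N"] assms by (simp add: algebra_simps)
  then show ?case
    using Suc.IH by simp
qed

lemma sum_square_div_large_primes_le:
  assumes "odd m" and "m > 1"
  shows "real (\<Sum>q | prime q \<and> m < q \<and> q \<le> n. (n div q)^2)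
           \<le> real n ^ 2 / (2 * (real m + 1))"
proof -
  define f where "f k = m + 2 + 2 * k" for k
  let ?Q = "{q. prime q \<and> m < q \<and> q \<le> n}"
  have Q_subset: "?Q \<subseteq> f ` {..<n}"
  proof
    fix q assume "q \<in> ?Q"
    then have q: "prime q" "m < q" "q \<le> n" by auto
    have "odd q"
      using prime_odd_nat[OF q(1)] q(2) assms(2) by simp
    then have "q = f ((q - m - 2) div 2)"
      using q(2) assms(1) by (auto simp: f_def elim!: oddE)
    moreover have "(q - m - 2) div 2 < n"
      using div_le_dividend[of "q - m - 2" 2] q(2,3) by linarith
    ultimately show "q \<in> f ` {..<n}" by blast
  qed
  have term_le: "real ((n div q)^2) \<le> real n ^ 2 * (1 / real q ^ 2)" for q
  proof -
    have "real (n div q) ^ 2 \<le> (real n / real q) ^ 2"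
      by (intro power_mono of_nat_div_le_of_nat) simp
    then show ?thesis by (simp add: power_divide)
  qed
  have "real (\<Sum>q\<in>?Q. (n div q)^2) \<le> (\<Sum>q\<in>?Q. real n ^ 2 * (1 / real q ^ 2))"
    unfolding of_nat_sum by (intro sum_mono term_le)
  also have "\<dots> \<le> (\<Sum>q\<in>f ` {..<n}. real n ^ 2 * (1 / real q ^ 2))"
    by (intro sum_mono2 Q_subset) auto
  also have "\<dots> = real n ^ 2 * (\<Sum>k<n. 1 / ((real m + 2) + 2 * real k)^2)"
    by (subst sum.reindex) (auto simp: inj_on_def f_def sum_distrib_left add_ac)
  also have "\<dots> \<le> real n ^ 2 * (1 / (2 * (real m + 1)))"
  proof -
    have "(\<Sum>k<n. 1 / ((real m + 2) + 2 * real k)^2)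
            \<le> 1 / (2 * (real m + 2 - 1)) - 1 / (2 * (real m + 2 - 1 + 2 * real n))"
      by (rule sum_inverse_squares_step_two_le) simp
    also have "\<dots> \<le> 1 / (2 * (real m + 2 - 1))"
      by simp
    also have "\<dots> = 1 / (2 * (real m + 1))"
      by simp
    finally show ?thesis by (intro mult_left_mono) auto
  qed
  finally show ?thesis by simp
qed

lemma primes_le_67:
  "{p::nat. prime p \<and> p \<le> 67}
     = {2, 3, 5, 7, 11, 13, 17, 19, 23, 29, 31, 37, 41, 43, 47, 53, 59, 61, 67}"
proof -
  have "{p::nat. prime p \<and> p \<le> 67} = Set.filter prime {..67}" by auto
  also have "\<dots> = {2, 3, 5, 7, 11, 13, 17, 19, 23, 29, 31, 37, 41, 43, 47, 53, 59, 61, 67}"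
    by code_simp
  finally show ?thesis .
qed

lemma sum_totient_lower_bound:
  "1219 / 2000 * real n ^ 2 - (2 ^ 19 - 1) * real n - real n ^ 2 / 136
     \<le> 2 * real (\<Sum>i=1..n. totient i)"
proof (cases "n = 0")
  case True
  then show ?thesis by simp
next
  case False
  define P where "P = {p::nat. prime p \<and> p \<le> 67}"
  have P: "finite P" "\<forall>p\<in>P. prime p" "card P = 19"
    by (simp_all add: P_def primes_le_67)
  have "1219 / 2000 \<le> (\<Prod>p\<in>P. 1 - 1 / real p ^ 2)"
    by (simp add: P_def primes_le_67)
  then have "1219 / 2000 * real n ^ 2 \<le> (\<Prod>p\<in>P. 1 - 1 / real p ^ 2) * real n ^ 2"
    by (intro mult_right_mono) auto
  then have sieved_ge:
      "1219 / 2000 * real n ^ 2 - (2 ^ 19 - 1) * real n \<le> real (card (sieved_pairs P n))"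
    using card_sieved_pairs_estimate[OF P(1,2), of n] unfolding P(3) abs_le_iff by linarith
  have "{q. prime q \<and> q \<notin> P \<and> q \<le> n} = {q. prime q \<and> 67 < q \<and> q \<le> n}"
    by (auto simp: P_def)
  then have "card (sieved_pairs P n)
      \<le> card (coprime_pairs n) + (\<Sum>q | prime q \<and> 67 < q \<and> q \<le> n. (n div q)^2)"
    using card_sieved_pairs_le[of P n] by simp
  then have "real (card (sieved_pairs P n))
      \<le> real (card (coprime_pairs n)) + real (\<Sum>q | prime q \<and> 67 < q \<and> q \<le> n. (n div q)^2)"
    by (simp only: of_nat_add [symmetric] of_nat_le_iff)
  moreover have "real (\<Sum>q | prime q \<and> 67 < q \<and> q \<le> n. (n div q)^2) \<le> real n ^ 2 / 136"
    using sum_square_div_large_primes_le[of 67 n] by simp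
  moreover have "real (card (coprime_pairs n) + 1) = real (2 * (\<Sum>i=1..n. totient i))"
    using card_coprime_pairs[of n] False by (simp only: One_nat_def Suc_le_eq neq0_conv)
  ultimately show ?thesis
    using sieved_ge by simp
qed

lemma sum_totient_upper_bound:
  assumes "n \<ge> 6"
  shows "2 * (\<Sum>i=1..n. totient i) + n < n^2"
proof -
  have "card (sieved_pairs {2} n) + (n div 2)^2 = n^2"
    using card_sieved_pairs_insert[of 2 "{}" n] by (simp add: power2_eq_square)
  moreover have "card (coprime_pairs n) \<le> card (sieved_pairs {2} n)"
    by (intro card_mono coprime_pairs_subset_sieved_pairs) auto
  moreover have "card (coprime_pairs n) + 1 = 2 * (\<Sum>i=1..n. totient i)"
    using assms card_coprime_pairs by simp
  moreover have "n + 1 < (n div 2)^2"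
  proof -
    define d where "d = n div 2"
    have "n \<le> 2 * d + 1" "3 \<le> d"
      using assms by (simp_all add: d_def)
    moreover have "3 * d \<le> d * d"
      using \<open>3 \<le> d\<close> by (intro mult_right_mono) auto
    ultimately show ?thesis
      unfolding d_def [symmetric] power2_eq_square by linarith
  qed
  ultimately show ?thesis by linarith
qed

lemma eventually_sum_totient_gt:
  "\<forall>\<^sub>F n in sequentially. 3/10 * real n ^ 2 < real (\<Sum>i=1..n. totient i)"
proof (rule eventually_sequentiallyI)
  fix n :: nat assume n: "n \<ge> 500 * 2 ^ 19"
  have "(2 ^ 19 - 1) * real n < real n / 500 * real n"
    using n by (intro mult_strict_right_mono) auto
  then have "(2 ^ 19 - 1) * real n < real n ^ 2 / 500"
    by (simp add: power2_eq_square)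
  moreover have "real n ^ 2 > 0"
    using n by simp
  ultimately show "3/10 * real n ^ 2 < real (\<Sum>i=1..n. totient i)"
    using sum_totient_lower_bound[of n] by linarith
qed

lemma eventually_sum_totient_lt:
  "\<forall>\<^sub>F n in sequentially. real (\<Sum>i=1..n. totient i) < (real n ^ 2 - real n) / 2"
proof (rule eventually_sequentiallyI)
  fix n :: nat assume "n \<ge> 6"
  then have "real (2 * (\<Sum>i=1..n. totient i) + n) < real (n^2)"
    using sum_totient_upper_bound of_nat_less_iff by blast
  then show "real (\<Sum>i=1..n. totient i) < (real n ^ 2 - real n) / 2"
    by simp
qed

theorem theorem10:
  shows "(\<forall>n. sigmaI n = (\<Sum>i=1..n. totient i))
    \<and> approxF (\<lambda>n. real (sigmaI n)) (\<lambda>n. (real n)^2)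
    \<and> lessF (\<lambda>n. 3/10 * (real n)^2) (\<lambda>n. real (sigmaI n))
    \<and> lessF (\<lambda>n. real (sigmaI n)) (\<lambda>n. ((real n)^2 - real n) / 2)"
proof -
  have lower: "lessF (\<lambda>n. 3/10 * (real n)^2) (\<lambda>n. real (sigmaI n))"
    using eventually_sum_totient_gt by (simp add: lessF_def sigmaI_eq_sum_totient)
  have upper: "lessF (\<lambda>n. real (sigmaI n)) (\<lambda>n. ((real n)^2 - real n) / 2)"
    using eventually_sum_totient_lt by (simp add: lessF_def sigmaI_eq_sum_totient)
  have "geF (\<lambda>n. real 4 * real (sigmaI n)) (\<lambda>n. (real n)^2)"
    using lower unfolding lessF_def geF_def by (rule eventually_mono) simp
  moreover have "geF (\<lambda>n. real 1 * (real n)^2) (\<lambda>n. real (sigmaI n))"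
    using upper unfolding lessF_def geF_def
    by (rule eventually_mono) (simp add: field_simps power2_eq_square flip: of_nat_mult)
  ultimately have "approxF (\<lambda>n. real (sigmaI n)) (\<lambda>n. (real n)^2)"
    unfolding approxF_def by (metis le_refl one_le_numeral)
  then show ?thesis
    using lower upper sigmaI_eq_sum_totient by blast
qed

end
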